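(* Let $\gamma>0$, $A:=K+\gamma M$, $A^{\rm aux}:=G^TAJ^{\rm grad}_{\varepsilon,\bm\beta}$, and let $S^{\rm aux}$ be a translation-invariant node operator with $S^{\rm aux}\varphi(\bm\theta)_N=s(\bm\theta)\varphi(\bm\theta)_N$. Fix $\bm\theta\in[-\pi/2,3\pi/2)^2\setminus\{(0,0)\}$. Then $A^{\rm aux}$ acts on $\mathrm{span}\{\varphi(\bm\theta)_N\}$ as multiplication by the nonzero number $\tfrac{2\gamma}{3}D(\bm\theta)$, and the operator $S^{\rm kc}:=I-J^{\rm grad}_{\varepsilon,\bm\beta}(I-S^{\rm aux})(A^{\rm aux})^{-1}G^TA$, restricted to $F_E(\bm\theta)$ (with $(A^{\rm aux})^{-1}$ the inverse of $A^{\rm aux}$ on $\mathrm{span}\{\varphi(\bm\theta)_N\}$), satisfies $$S^{\rm kc}\psi_J(\bm\theta)_E=s(\bm\theta)\psi_J(\bm\theta)_E,\qquad S^{\rm kc}\psi_s(\bm\theta)_E=\frac{2(s(\bm\theta)-1)s_1s_2(\tilde c_2-\tilde c_1)}{D(\bm\theta)}\psi_J(\bm\theta)_E+\psi_s(\bm\theta)_E,$$ where $D(\bm\theta)=(2+\tilde c_2)s_1^2\sigma_1+(2+\tilde c_1)s_2^2\sigma_2-\tfrac{i}{2}\tilde s_1b_1(2+\tilde c_2)-\tfrac{i}{2}\tilde s_2b_2(2+\tilde c_1)$.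
   Context: Fix constants $\varepsilon>0$, $\bm{\beta}=(\beta_1,\beta_2)\in\mathbb{R}^2$, $h>0$, and set $b_j:=\beta_j h$. The Bernoulli function is $B_\varepsilon(s):=\varepsilon\big/\int_0^1 e^{sx/\varepsilon}\,dx$. Write $\sigma_j:=B_\varepsilon(b_j)+B_\varepsilon(-b_j)$, $s_j=\sin(\theta_j/2)$, $\tilde s_j=\sin\theta_j$, $\tilde c_j=\cos\theta_j$. Index sets: nodes $N=\mathbb{Z}^2$, horizontal edges $E_1=(\mathbb{Z}+\frac12)\times\mathbb{Z}$, vertical edges $E_2=\mathbb{Z}\times(\mathbb{Z}+\frac12)$, $E=E_1\cup E_2$, faces $F=(\mathbb{Z}+\frac12)^2$; grid functions are complex-valued functions on these sets; $e_1=(1,0)$, $e_2=(0,1)$. $J^{\rm grad}_{\varepsilon,\bm\beta}$: $(J^{\rm grad}_{\varepsilon,\bm\beta}f)_{\bm k}=-B_\varepsilon(b_j)f_{\bm k-e_j/2}+B_\varepsilon(-b_j)f_{\bm k+e_j/2}$ for $\bm k\in E_j$. $G^T$: $(G^Tg)_{\bm n}=\sum_{j=1}^2\big(g_{\bm n-e_j/2}-g_{\bm n+e_j/2}\big)$. $C^T$: $(C^Tf)_{\bm k}=f_{\bm k+e_2/2}-f_{\bm k-e_2/2}$ for $\bm k\in E_1$, $(C^Tf)_{\bm k}=f_{\bm k-e_1/2}-f_{\bm k+e_1/2}$ for $\bm k\in E_2$. The edge operator $K$ is defined, writing $B=B_\varepsilon$, by: for $\bm k\in E_1$, $h^2(Kf)_{\bm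 k}=\sigma_2f_{\bm k}-B(-b_2)f_{\bm k+e_2}-B(b_2)f_{\bm k-e_2}-B(b_1)f_{\bm k+(-\frac12,\frac12)}+B(-b_1)f_{\bm k+(\frac12,\frac12)}+B(b_1)f_{\bm k+(-\frac12,-\frac12)}-B(-b_1)f_{\bm k+(\frac12,-\frac12)}$; for $\bm k\in E_2$, $h^2(Kf)_{\bm k}=\sigma_1f_{\bm k}-B(b_1)f_{\bm k-e_1}-B(-b_1)f_{\bm k+e_1}-B(-b_2)f_{\bm k+(-\frac12,\frac12)}+B(-b_2)f_{\bm k+(\frac12,\frac12)}+B(b_2)f_{\bm k+(-\frac12,-\frac12)}-B(b_2)f_{\bm k+(\frac12,-\frac12)}$. The edge mass operator $M$: $(Mf)_{\bm k}=\frac23f_{\bm k}+\frac16(f_{\bm k+e_2}+f_{\bm k-e_2})$ for $\bm k\in E_1$, and $(Mf)_{\bm k}=\frac23f_{\bm k}+\frac16(f_{\bm k+e_1}+f_{\bm k-e_1})$ for $\bm k\in E_2$. Fourier modes: $\varphi(\bm\theta)_S(\bm k):=e^{i\bm\theta\cdot\bm k}$ for $\bm k\in S\in\{N,E,F\}$; $\varphi_j(\bm\theta)_E:=\chi_{E_j}\varphi(\bm\theta)_E$; $F_E(\bm\theta):=\mathrm{span}\{\varphi_1(\bm\theta)_E,\varphi_2(\bm\theta)_E\}$; $\psi_J(\bm\theta)_E:=J^{\rm grad}_{\varepsilon,\bm\beta}\varphi(\bm\theta)_N$, $\psi_s(\bm\theta)_E:=C^T\varphi(\bm\theta)_F$.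 *)

theory Defs
  imports "HOL-Analysis.Analysis"
begin

text \<open>A grid function is a complex-valued
function on the plane; only its values on the relevant index set matter, and every operator
below returns 0 outside its target index set.\<close>

type_synonym gridfun = "real \<times> real \<Rightarrow> complex"

definition Bern :: "real \<Rightarrow> real \<Rightarrow> real" where
  "Bern \<epsilon> s = \<epsilon> / integral {0..1} (\<lambda>x. exp (s * x / \<epsilon>))"

definition Nset :: "(real \<times> real) set" where
  "Nset = {k. fst k \<in> \<int> \<and> snd k \<in> \<int>}"
definition E1set :: "(real \<times> real) set" where
  "E1set = {k. fst k - 1/2 \<in> \<int> \<and> snd k \<in> \<int>}"
definition E2set :: "(real \<times> real) set" where
  "E2set = {k. fst k \<in> \<int> \<and> snd k - 1/2 \<in> \<int>}"
definition Eset :: "(real \<times> real) set" where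
  "Eset = E1set \<union> E2set"
definition Fset :: "(real \<times> real) set" where
  "Fset = {k. fst k - 1/2 \<in> \<int> \<and> snd k - 1/2 \<in> \<int>}"

definition sh :: "real \<times> real \<Rightarrow> real \<Rightarrow> real \<Rightarrow> real \<times> real" where
  "sh k a c = (fst k + a, snd k + c)"

definition Jgrad :: "real \<Rightarrow> real \<Rightarrow> real \<Rightarrow> real \<Rightarrow> gridfun \<Rightarrow> gridfun" where
  "Jgrad \<epsilon> \<beta>1 \<beta>2 h f k =
     (if k \<in> E1set then - of_real (Bern \<epsilon> (\<beta>1*h)) * f (sh k (-1/2) 0)
                        + of_real (Bern \<epsilon> (-(\<beta>1*h))) * f (sh k (1/2) 0)
      else if k \<in> E2set then - of_real (Bern \<epsilon> (\<beta>2*h)) * f (sh k 0 (-1/2))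
                        + of_real (Bern \<epsilon> (-(\<beta>2*h))) * f (sh k 0 (1/2))
      else 0)"

definition GT :: "gridfun \<Rightarrow> gridfun" where
  "GT g n = (if n \<in> Nset then (g (sh n (-1/2) 0) - g (sh n (1/2) 0))
                            + (g (sh n 0 (-1/2)) - g (sh n 0 (1/2))) else 0)"

definition CT :: "gridfun \<Rightarrow> gridfun" where
  "CT f k = (if k \<in> E1set then f (sh k 0 (1/2)) - f (sh k 0 (-1/2))
             else if k \<in> E2set then f (sh k (-1/2) 0) - f (sh k (1/2) 0)
             else 0)"

definition sigma :: "real \<Rightarrow> real \<Rightarrow> real" where
  "sigma \<epsilon> b = Bern \<epsilon> b + Bern \<epsilon> (-b)"

definition Kop :: "real \<Rightarrow> real \<Rightarrow> real \<Rightarrow> real \<Rightarrow> gridfun \<Rightarrow> gridfun" where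
  "Kop \<epsilon> \<beta>1 \<beta>2 h f k =
     (let b1 = \<beta>1*h; b2 = \<beta>2*h; B = (\<lambda>s. complex_of_real (Bern \<epsilon> s)) in
      if k \<in> E1set then
        (of_real (sigma \<epsilon> b2) * f k - B (-b2) * f (sh k 0 1) - B b2 * f (sh k 0 (-1))
         - B b1 * f (sh k (-1/2) (1/2)) + B (-b1) * f (sh k (1/2) (1/2))
         + B b1 * f (sh k (-1/2) (-1/2)) - B (-b1) * f (sh k (1/2) (-1/2))) / of_real (h^2)
      else if k \<in> E2set then
        (of_real (sigma \<epsilon> b1) * f k - B b1 * f (sh k (-1) 0) - B (-b1) * f (sh k 1 0)
         - B (-b2) * f (sh k (-1/2) (1/2)) + B (-b2) * f (sh k (1/2) (1/2))
         + B b2 * f (sh k (-1/2) (-1/2)) - B b2 * f (sh k (1/2) (-1/2))) / of_real (h^2)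
      else 0)"

definition Mop :: "gridfun \<Rightarrow> gridfun" where
  "Mop f k =
     (if k \<in> E1set then 2/3 * f k + 1/6 * (f (sh k 0 1) + f (sh k 0 (-1)))
      else if k \<in> E2set then 2/3 * f k + 1/6 * (f (sh k 1 0) + f (sh k (-1) 0))
      else 0)"

definition Aop :: "real \<Rightarrow> real \<Rightarrow> real \<Rightarrow> real \<Rightarrow> real \<Rightarrow> gridfun \<Rightarrow> gridfun" where
  "Aop \<epsilon> \<beta>1 \<beta>2 h \<gamma> f = (\<lambda>k. Kop \<epsilon> \<beta>1 \<beta>2 h f k + of_real \<gamma> * Mop f k)"

definition Aaux :: "real \<Rightarrow> real \<Rightarrow> real \<Rightarrow> real \<Rightarrow> real \<Rightarrow> gridfun \<Rightarrow> gridfun" where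
  "Aaux \<epsilon> \<beta>1 \<beta>2 h \<gamma> f = GT (Aop \<epsilon> \<beta>1 \<beta>2 h \<gamma> (Jgrad \<epsilon> \<beta>1 \<beta>2 h f))"

definition phi :: "(real \<times> real) set \<Rightarrow> real \<times> real \<Rightarrow> gridfun" where
  "phi S \<theta> k = (if k \<in> S then exp (\<i> * complex_of_real (fst \<theta> * fst k + snd \<theta> * snd k)) else 0)"

definition FE :: "real \<times> real \<Rightarrow> gridfun set" where
  "FE \<theta> = {f. \<exists>a c. f = (\<lambda>k. a * phi E1set \<theta> k + c * phi E2set \<theta> k)}"

definition psiJ :: "real \<Rightarrow> real \<Rightarrow> real \<Rightarrow> real \<Rightarrow> real \<times> real \<Rightarrow> gridfun" where
  "psiJ \<epsilon> \<beta>1 \<beta>2 h \<theta> = Jgrad \<epsilon> \<beta>1 \<beta>2 h (phi Nset \<theta>)"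

definition psis :: "real \<times> real \<Rightarrow> gridfun" where
  "psis \<theta> = CT (phi Fset \<theta>)"

definition spanN :: "real \<times> real \<Rightarrow> gridfun set" where
  "spanN \<theta> = {f. \<exists>c. f = (\<lambda>k. c * phi Nset \<theta> k)}"

definition AauxInv :: "real \<Rightarrow> real \<Rightarrow> real \<Rightarrow> real \<Rightarrow> real \<Rightarrow> real \<times> real \<Rightarrow> gridfun \<Rightarrow> gridfun" where
  "AauxInv \<epsilon> \<beta>1 \<beta>2 h \<gamma> \<theta> g = (THE u. u \<in> spanN \<theta> \<and> Aaux \<epsilon> \<beta>1 \<beta>2 h \<gamma> u = g)"

definition Skc :: "real \<Rightarrow> real \<Rightarrow> real \<Rightarrow> real \<Rightarrow> real \<Rightarrow> real \<times> real \<Rightarrow> (gridfun \<Rightarrow> gridfun)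
                    \<Rightarrow> gridfun \<Rightarrow> gridfun" where
  "Skc \<epsilon> \<beta>1 \<beta>2 h \<gamma> \<theta> S f =
     (let u = AauxInv \<epsilon> \<beta>1 \<beta>2 h \<gamma> \<theta> (GT (Aop \<epsilon> \<beta>1 \<beta>2 h \<gamma> f));
          v = Jgrad \<epsilon> \<beta>1 \<beta>2 h (\<lambda>k. u k - S u k)
      in (\<lambda>k. f k - v k))"

definition transl_inv_lin :: "(gridfun \<Rightarrow> gridfun) \<Rightarrow> bool" where
  "transl_inv_lin S \<longleftrightarrow>
     (\<forall>f g. S (\<lambda>k. f k + g k) = (\<lambda>k. S f k + S g k)) \<and>
     (\<forall>c f. S (\<lambda>k. c * f k) = (\<lambda>k. c * S f k)) \<and>
     (\<forall>m1 m2 f. m1 \<in> \<int> \<and> m2 \<in> \<int> \<longrightarrow>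
        S (\<lambda>k. f (sh k m1 m2)) = (\<lambda>k. S f (sh k m1 m2)))"

definition Dsym :: "real \<Rightarrow> real \<Rightarrow> real \<Rightarrow> real \<Rightarrow> real \<times> real \<Rightarrow> complex" where
  "Dsym \<epsilon> \<beta>1 \<beta>2 h \<theta> =
     (let b1 = \<beta>1*h; b2 = \<beta>2*h; t1 = fst \<theta>; t2 = snd \<theta>;
          s1 = sin (t1/2); s2 = sin (t2/2) in
      complex_of_real ((2 + cos t2) * s1^2 * sigma \<epsilon> b1 + (2 + cos t1) * s2^2 * sigma \<epsilon> b2)
      - \<i>/2 * complex_of_real (sin t1 * b1 * (2 + cos t2))
      - \<i>/2 * complex_of_real (sin t2 * b2 * (2 + cos t1)))"

end

theory Submission
  imports Defs
begin

text \<open>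
  On the Fourier edge space every operator acts through its symbol, a Laurent polynomial in the
  half-step phases w_j = exp(i theta_j / 2): J^grad sends the node mode to psi_J, C^T sends the
  face mode to psi_s, and G^T maps edge modes back to multiples of the node mode. Because
  B(-b) = B(b) + b, the symbol of G^T K vanishes, so G^T A = gamma G^T M on edge modes and the
  symbol of A^aux is gamma times the mass symbol of J^grad, namely 2/3 D(theta). The real part of
  D(theta) is a positive combination of sin^2(theta_j / 2), which do not both vanish in the given
  range, so A^aux is invertible on the node mode. For f = psi_J and f = psi_s the vector G^T A f is
  an explicit multiple q of the node mode, whence S^kc f = f - q (1 - s) / (2 gamma / 3 D) psi_J.
\<close>

section \<open>The Bernoulli function\<close>

lemma Bern_eq_divide:
  assumes "\<epsilon> > 0" and "s \<noteq> 0"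
  shows "Bern \<epsilon> s = s / (exp (s / \<epsilon>) - 1)"
proof -
  have "((\<lambda>x. exp (s * x / \<epsilon>)) has_integral (\<epsilon> / s * exp (s * 1 / \<epsilon>) - \<epsilon> / s * exp (s * 0 / \<epsilon>))) {0..1}"
  proof (rule fundamental_theorem_of_calculus)
    show "((\<lambda>x. \<epsilon> / s * exp (s * x / \<epsilon>)) has_vector_derivative exp (s * x / \<epsilon>)) (at x within {0..1})"
      for x
      using assms by (auto intro!: derivative_eq_intros simp: has_real_derivative_iff_has_vector_derivative[symmetric])
  qed simp
  then have "integral {0..1} (\<lambda>x. exp (s * x / \<epsilon>)) = \<epsilon> / s * (exp (s / \<epsilon>) - 1)"
    by (simp add: integral_unique right_diff_distrib)
  moreover have "exp (s / \<epsilon>) \<noteq> 1"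
    using assms by simp
  ultimately show ?thesis
    using assms unfolding Bern_def by simp
qed

lemma Bern_pos:
  assumes "\<epsilon> > 0"
  shows "Bern \<epsilon> s > 0"
proof -
  consider "s = 0" | "s > 0" | "s < 0"
    by linarith
  then show ?thesis
  proof cases
    case 1
    then show ?thesis
      using assms by (simp add: Bern_def)
  next
    case 2
    then have "exp (s / \<epsilon>) > 1"
      using assms by simp
    with 2 show ?thesis
      using assms by (simp add: Bern_eq_divide)
  next
    case 3
    then have "exp (s / \<epsilon>) < 1"
      using assms by (simp add: divide_neg_pos)
    with 3 show ?thesis
      using assms by (simp add: Bern_eq_divide divide_neg_neg)
  qed
qed

lemma Bern_uminus:
  assumes "\<epsilon> > 0"
  shows "Bern \<epsilon> (- s) = Bern \<epsilon> s + s"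
proof (cases "s = 0")
  case False
  then have "exp (s / \<epsilon>) \<noteq> 1"
    using assms by simp
  moreover have "exp (- s / \<epsilon>) = inverse (exp (s / \<epsilon>))"
    by (simp add: exp_minus)
  ultimately show ?thesis
    using assms False by (simp add: Bern_eq_divide field_simps)
qed simp

lemma sigma_pos: "\<epsilon> > 0 \<Longrightarrow> sigma \<epsilon> b > 0"
  unfolding sigma_def by (simp add: Bern_pos add_pos_pos)

lemma of_real_Bern_uminus:
  "\<epsilon> > 0 \<Longrightarrow> complex_of_real (Bern \<epsilon> (- s)) = of_real (Bern \<epsilon> s) + of_real s"
  by (simp add: Bern_uminus)

lemma of_real_sigma:
  "\<epsilon> > 0 \<Longrightarrow> complex_of_real (sigma \<epsilon> b) = 2 * of_real (Bern \<epsilon> b) + of_real b"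
  by (simp add: sigma_def Bern_uminus)

lemma Ints_shift: "x \<in> \<int> \<Longrightarrow> y - x \<in> \<int> \<Longrightarrow> (y::real) \<in> \<int>"
  by (metis Ints_add diff_add_cancel)

lemma half_not_Ints: "(1/2::real) \<notin> \<int>"
proof
  assume "(1/2::real) \<in> \<int>"
  then obtain n :: int where "(1/2::real) = of_int n"
    by (auto elim: Ints_cases)
  then have "(1::int) = 2 * n"
    by linarith
  then show False
    by presburger
qed

lemma E1set_disjoint_E2set: "k \<in> E1set \<Longrightarrow> k \<notin> E2set"
  unfolding E1set_def E2set_def using half_not_Ints Ints_shift by force

lemma E2set_disjoint_E1set: "k \<in> E2set \<Longrightarrow> k \<notin> E1set"
  using E1set_disjoint_E2set by blast

lemma E1set_neighbours:
  assumes "k \<in> E1set"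
  shows "sh k (-1/2) 0 \<in> Nset" "sh k (1/2) 0 \<in> Nset"
    "sh k 0 1 \<in> E1set" "sh k 0 (-1) \<in> E1set"
    "sh k (-1/2) (1/2) \<in> E2set" "sh k (1/2) (1/2) \<in> E2set"
    "sh k (-1/2) (-1/2) \<in> E2set" "sh k (1/2) (-1/2) \<in> E2set"
    "sh k 0 (1/2) \<in> Fset" "sh k 0 (-1/2) \<in> Fset"
  using assms unfolding E1set_def E2set_def Nset_def Fset_def sh_def
  by (auto intro: Ints_shift[of "fst k - 1/2"] Ints_shift[of "snd k"])

lemma E2set_neighbours:
  assumes "k \<in> E2set"
  shows "sh k 0 (-1/2) \<in> Nset" "sh k 0 (1/2) \<in> Nset"
    "sh k 1 0 \<in> E2set" "sh k (-1) 0 \<in> E2set"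
    "sh k (-1/2) (1/2) \<in> E1set" "sh k (1/2) (1/2) \<in> E1set"
    "sh k (-1/2) (-1/2) \<in> E1set" "sh k (1/2) (-1/2) \<in> E1set"
    "sh k (1/2) 0 \<in> Fset" "sh k (-1/2) 0 \<in> Fset"
  using assms unfolding E1set_def E2set_def Nset_def Fset_def sh_def
  by (auto intro: Ints_shift[of "fst k"] Ints_shift[of "snd k - 1/2"])

lemma Nset_neighbours:
  assumes "k \<in> Nset"
  shows "sh k (-1/2) 0 \<in> E1set" "sh k (1/2) 0 \<in> E1set"
    "sh k 0 (-1/2) \<in> E2set" "sh k 0 (1/2) \<in> E2set"
  using assms unfolding E1set_def E2set_def Nset_def sh_def
  by (auto intro: Ints_shift[of "fst k"] Ints_shift[of "snd k"])

(* simp rewrites literal shifts such as -1/2 before matching, so the simplified forms are needed too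
   (likewise in wave_sh_simps) *)
lemmas lattice_neighbours =
  E1set_neighbours E1set_neighbours[simplified]
  E2set_neighbours E2set_neighbours[simplified]
  Nset_neighbours Nset_neighbours[simplified]
  E1set_disjoint_E2set E2set_disjoint_E1set

definition wave :: "real \<times> real \<Rightarrow> real \<times> real \<Rightarrow> complex" where
  "wave t k = cis (fst t * fst k + snd t * snd k)"

definition w1 :: "real \<times> real \<Rightarrow> complex" where
  "w1 t = cis (fst t / 2)"

definition w2 :: "real \<times> real \<Rightarrow> complex" where
  "w2 t = cis (snd t / 2)"

lemma phi_eq_wave: "phi S t k = (if k \<in> S then wave t k else 0)"
  unfolding phi_def wave_def by (simp add: cis_conv_exp)

lemma phi_Nset_origin: "phi Nset t (0, 0) = 1"
  unfolding phi_def Nset_def by simp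

lemma wave_sh: "wave t (sh k a c) = wave t k * cis (fst t * a) * cis (snd t * c)"
  unfolding wave_def sh_def by (simp add: cis_mult algebra_simps)

lemma cis_half_multiples:
  "cis (x * (1/2)) = cis (x/2)" "cis (x * (-1/2)) = inverse (cis (x/2))"
  "cis (x * 1) = cis (x/2)^2" "cis (x * (-1)) = inverse (cis (x/2))^2" "cis (x * 0) = 1"
  by (simp_all add: power2_eq_square cis_mult)

lemmas wave_sh_lattice = wave_sh[of _ _ "1/2" 0] wave_sh[of _ _ "-1/2" 0]
  wave_sh[of _ _ 0 "1/2"] wave_sh[of _ _ 0 "-1/2"]
  wave_sh[of _ _ "1/2" "1/2"] wave_sh[of _ _ "-1/2" "1/2"]
  wave_sh[of _ _ "1/2" "-1/2"] wave_sh[of _ _ "-1/2" "-1/2"]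
  wave_sh[of _ _ 1 0] wave_sh[of _ _ "-1" 0] wave_sh[of _ _ 0 1] wave_sh[of _ _ 0 "-1"]

lemmas wave_sh_half_steps =
  wave_sh_lattice[unfolded cis_half_multiples, folded w1_def w2_def, simplified mult_1_right]

lemmas wave_sh_simps = wave_sh_half_steps wave_sh_half_steps[simplified]

lemma w1_nonzero: "w1 t \<noteq> 0" and w2_nonzero: "w2 t \<noteq> 0"
  unfolding w1_def w2_def by simp_all

lemma cis_half_square: "cis (x/2)^2 = cis x" "inverse (cis (x/2))^2 = cis (- x)"
  by (simp_all add: power2_eq_square cis_mult)

lemma cos_eq_cis_half: "complex_of_real (cos x) = (cis (x/2)^2 + inverse (cis (x/2))^2) / 2"
  unfolding cis_half_square by (simp add: cis.code complex_eq_iff)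

lemma sin_eq_cis_half: "\<i>/2 * complex_of_real (sin x) = (cis (x/2)^2 - inverse (cis (x/2))^2) / 4"
  unfolding cis_half_square by (simp add: cis.code complex_eq_iff)

lemma sin_half_eq_cis_half: "complex_of_real (sin (x/2)) = (cis (x/2) - inverse (cis (x/2))) / (2*\<i>)"
  by (simp add: cis.code complex_eq_iff)

lemma sin_half_square_eq_cis_half:
  "complex_of_real (sin (x/2))^2 = - ((cis (x/2) - inverse (cis (x/2)))^2) / 4"
  unfolding sin_half_eq_cis_half by (simp add: power_divide power_mult_distrib)

section \<open>Symbols of the operators on the edge Fourier space\<close>

definition edge_mode :: "real \<times> real \<Rightarrow> complex \<Rightarrow> complex \<Rightarrow> gridfun" where
  "edge_mode t a1 a2 k =
     (if k \<in> E1set then a1 * wave t k else if k \<in> E2set then a2 * wave t k else 0)"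

lemma edge_mode_in_FE: "edge_mode t a1 a2 \<in> FE t"
  unfolding FE_def edge_mode_def phi_eq_wave
  by (auto intro!: exI ext dest: E1set_disjoint_E2set)

lemma scale_edge_mode: "(\<lambda>k. c * edge_mode t a1 a2 k) = edge_mode t (c * a1) (c * a2)"
  unfolding edge_mode_def by auto

definition Jgrad_symbol1 :: "real \<Rightarrow> real \<Rightarrow> real \<Rightarrow> real \<times> real \<Rightarrow> complex" where
  "Jgrad_symbol1 \<epsilon> \<beta>1 h t =
     - of_real (Bern \<epsilon> (\<beta>1*h)) * inverse (w1 t) + of_real (Bern \<epsilon> (-(\<beta>1*h))) * w1 t"

definition Jgrad_symbol2 :: "real \<Rightarrow> real \<Rightarrow> real \<Rightarrow> real \<times> real \<Rightarrow> complex" where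
  "Jgrad_symbol2 \<epsilon> \<beta>2 h t =
     - of_real (Bern \<epsilon> (\<beta>2*h)) * inverse (w2 t) + of_real (Bern \<epsilon> (-(\<beta>2*h))) * w2 t"

lemma Jgrad_phi_Nset:
  "Jgrad \<epsilon> \<beta>1 \<beta>2 h (phi Nset t) = edge_mode t (Jgrad_symbol1 \<epsilon> \<beta>1 h t) (Jgrad_symbol2 \<epsilon> \<beta>2 h t)"
  unfolding Jgrad_def edge_mode_def phi_eq_wave Jgrad_symbol1_def Jgrad_symbol2_def
  by (auto simp: lattice_neighbours wave_sh_simps algebra_simps)

lemma Jgrad_scale: "Jgrad \<epsilon> \<beta>1 \<beta>2 h (\<lambda>k. c * f k) = (\<lambda>k. c * Jgrad \<epsilon> \<beta>1 \<beta>2 h f k)"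
  unfolding Jgrad_def by (auto simp: algebra_simps)

lemma psis_eq_edge_mode: "psis t = edge_mode t (w2 t - inverse (w2 t)) (inverse (w1 t) - w1 t)"
  unfolding psis_def CT_def edge_mode_def phi_eq_wave
  by (auto simp: lattice_neighbours wave_sh_simps algebra_simps)

definition GT_symbol :: "real \<times> real \<Rightarrow> complex \<Rightarrow> complex \<Rightarrow> complex" where
  "GT_symbol t a1 a2 = (inverse (w1 t) - w1 t) * a1 + (inverse (w2 t) - w2 t) * a2"

lemma GT_edge_mode: "GT (edge_mode t a1 a2) = (\<lambda>k. GT_symbol t a1 a2 * phi Nset t k)"
  unfolding GT_def edge_mode_def phi_eq_wave GT_symbol_def
  by (auto simp: lattice_neighbours wave_sh_simps algebra_simps)

definition K_symbol1 :: "real \<Rightarrow> real \<Rightarrow> real \<Rightarrow> real \<Rightarrow> real \<times> real \<Rightarrow> complex \<Rightarrow> complex \<Rightarrow> complex" where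
  "K_symbol1 \<epsilon> \<beta>1 \<beta>2 h t a1 a2 =
     (let B = (\<lambda>s. complex_of_real (Bern \<epsilon> s)); b1 = \<beta>1*h; b2 = \<beta>2*h in
      of_real (sigma \<epsilon> b2) * a1 - B (-b2) * w2 t ^ 2 * a1 - B b2 * inverse (w2 t) ^ 2 * a1
      - B b1 * inverse (w1 t) * w2 t * a2 + B (-b1) * w1 t * w2 t * a2
      + B b1 * inverse (w1 t) * inverse (w2 t) * a2 - B (-b1) * w1 t * inverse (w2 t) * a2)"

definition K_symbol2 :: "real \<Rightarrow> real \<Rightarrow> real \<Rightarrow> real \<Rightarrow> real \<times> real \<Rightarrow> complex \<Rightarrow> complex \<Rightarrow> complex" where
  "K_symbol2 \<epsilon> \<beta>1 \<beta>2 h t a1 a2 =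
     (let B = (\<lambda>s. complex_of_real (Bern \<epsilon> s)); b1 = \<beta>1*h; b2 = \<beta>2*h in
      of_real (sigma \<epsilon> b1) * a2 - B b1 * inverse (w1 t) ^ 2 * a2 - B (-b1) * w1 t ^ 2 * a2
      - B (-b2) * inverse (w1 t) * w2 t * a1 + B (-b2) * w1 t * w2 t * a1
      + B b2 * inverse (w1 t) * inverse (w2 t) * a1 - B b2 * w1 t * inverse (w2 t) * a1)"

definition M_symbol1 :: "real \<times> real \<Rightarrow> complex \<Rightarrow> complex" where
  "M_symbol1 t a1 = 2/3 * a1 + 1/6 * (w2 t ^ 2 * a1 + inverse (w2 t) ^ 2 * a1)"

definition M_symbol2 :: "real \<times> real \<Rightarrow> complex \<Rightarrow> complex" where
  "M_symbol2 t a2 = 2/3 * a2 + 1/6 * (w1 t ^ 2 * a2 + inverse (w1 t) ^ 2 * a2)"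

lemma Kop_edge_mode:
  "Kop \<epsilon> \<beta>1 \<beta>2 h (edge_mode t a1 a2) =
     edge_mode t (K_symbol1 \<epsilon> \<beta>1 \<beta>2 h t a1 a2 / of_real (h^2)) (K_symbol2 \<epsilon> \<beta>1 \<beta>2 h t a1 a2 / of_real (h^2))"
  unfolding Kop_def edge_mode_def K_symbol1_def K_symbol2_def Let_def
  by (auto simp: lattice_neighbours wave_sh_simps algebra_simps add_divide_distrib diff_divide_distrib)

lemma Mop_edge_mode: "Mop (edge_mode t a1 a2) = edge_mode t (M_symbol1 t a1) (M_symbol2 t a2)"
  unfolding Mop_def edge_mode_def M_symbol1_def M_symbol2_def
  by (auto simp: lattice_neighbours wave_sh_simps algebra_simps)

lemma GT_symbol_K_symbol:
  assumes "\<epsilon> > 0"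
  shows "GT_symbol t (K_symbol1 \<epsilon> \<beta>1 \<beta>2 h t a1 a2) (K_symbol2 \<epsilon> \<beta>1 \<beta>2 h t a1 a2) = 0"
  using w1_nonzero[of t] w2_nonzero[of t]
  unfolding GT_symbol_def K_symbol1_def K_symbol2_def Let_def
    of_real_Bern_uminus[OF assms] of_real_sigma[OF assms]
  by (simp add: field_simps) algebra

lemma Aop_edge_mode:
  "Aop \<epsilon> \<beta>1 \<beta>2 h \<gamma> (edge_mode t a1 a2) =
     edge_mode t (K_symbol1 \<epsilon> \<beta>1 \<beta>2 h t a1 a2 / of_real (h^2) + of_real \<gamma> * M_symbol1 t a1)
                 (K_symbol2 \<epsilon> \<beta>1 \<beta>2 h t a1 a2 / of_real (h^2) + of_real \<gamma> * M_symbol2 t a2)"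
  unfolding Aop_def Kop_edge_mode Mop_edge_mode by (auto simp: edge_mode_def algebra_simps)

lemma GT_Aop_edge_mode:
  assumes "\<epsilon> > 0"
  shows "GT (Aop \<epsilon> \<beta>1 \<beta>2 h \<gamma> (edge_mode t a1 a2)) =
    (\<lambda>k. of_real \<gamma> * GT_symbol t (M_symbol1 t a1) (M_symbol2 t a2) * phi Nset t k)"
proof -
  have "GT_symbol t (K_symbol1 \<epsilon> \<beta>1 \<beta>2 h t a1 a2 / of_real (h^2) + of_real \<gamma> * M_symbol1 t a1)
                    (K_symbol2 \<epsilon> \<beta>1 \<beta>2 h t a1 a2 / of_real (h^2) + of_real \<gamma> * M_symbol2 t a2)
     = GT_symbol t (K_symbol1 \<epsilon> \<beta>1 \<beta>2 h t a1 a2) (K_symbol2 \<epsilon> \<beta>1 \<beta>2 h t a1 a2) / of_real (h^2)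
       + of_real \<gamma> * GT_symbol t (M_symbol1 t a1) (M_symbol2 t a2)"
    unfolding GT_symbol_def by (simp add: algebra_simps add_divide_distrib diff_divide_distrib)
  then show ?thesis
    unfolding Aop_edge_mode GT_edge_mode GT_symbol_K_symbol[OF assms] by simp
qed

lemma trig_eq_w:
  "complex_of_real (cos (fst t)) = (w1 t^2 + inverse (w1 t)^2) / 2"
  "complex_of_real (cos (snd t)) = (w2 t^2 + inverse (w2 t)^2) / 2"
  "\<i>/2 * complex_of_real (sin (fst t)) = (w1 t^2 - inverse (w1 t)^2) / 4"
  "\<i>/2 * complex_of_real (sin (snd t)) = (w2 t^2 - inverse (w2 t)^2) / 4"
  "complex_of_real (sin (fst t / 2))^2 = - ((w1 t - inverse (w1 t))^2) / 4"
  "complex_of_real (sin (snd t / 2))^2 = - ((w2 t - inverse (w2 t))^2) / 4"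
  "complex_of_real (sin (fst t / 2)) = (w1 t - inverse (w1 t)) / (2*\<i>)"
  "complex_of_real (sin (snd t / 2)) = (w2 t - inverse (w2 t)) / (2*\<i>)"
  unfolding w1_def w2_def
  by (rule cos_eq_cis_half sin_eq_cis_half sin_half_square_eq_cis_half sin_half_eq_cis_half)+

lemma Dsym_eq_symbols:
  assumes "\<epsilon> > 0"
  shows "Dsym \<epsilon> \<beta>1 \<beta>2 h t =
   (2 + (w2 t^2 + inverse (w2 t)^2)/2) * (- ((w1 t - inverse (w1 t))^2) / 4)
      * (2 * of_real (Bern \<epsilon> (\<beta>1*h)) + of_real (\<beta>1*h))
   + (2 + (w1 t^2 + inverse (w1 t)^2)/2) * (- ((w2 t - inverse (w2 t))^2) / 4)
      * (2 * of_real (Bern \<epsilon> (\<beta>2*h)) + of_real (\<beta>2*h))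
   - (w1 t^2 - inverse (w1 t)^2) / 4 * of_real (\<beta>1*h) * (2 + (w2 t^2 + inverse (w2 t)^2)/2)
   - (w2 t^2 - inverse (w2 t)^2) / 4 * of_real (\<beta>2*h) * (2 + (w1 t^2 + inverse (w1 t)^2)/2)"
proof -
  have "Dsym \<epsilon> \<beta>1 \<beta>2 h t =
     (2 + of_real (cos (snd t))) * of_real (sin (fst t/2))^2 * of_real (sigma \<epsilon> (\<beta>1*h))
     + (2 + of_real (cos (fst t))) * of_real (sin (snd t/2))^2 * of_real (sigma \<epsilon> (\<beta>2*h))
     - (\<i>/2 * of_real (sin (fst t))) * of_real (\<beta>1*h) * (2 + of_real (cos (snd t)))
     - (\<i>/2 * of_real (sin (snd t))) * of_real (\<beta>2*h) * (2 + of_real (cos (fst t)))"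
    unfolding Dsym_def Let_def by (simp add: field_simps)
  then show ?thesis
    unfolding trig_eq_w(1-6) of_real_sigma[OF assms] .
qed

lemma GT_symbol_M_symbol_Jgrad_symbol:
  assumes "\<epsilon> > 0"
  shows "GT_symbol t (M_symbol1 t (c * Jgrad_symbol1 \<epsilon> \<beta>1 h t)) (M_symbol2 t (c * Jgrad_symbol2 \<epsilon> \<beta>2 h t))
    = 2/3 * Dsym \<epsilon> \<beta>1 \<beta>2 h t * c"
  using w1_nonzero[of t] w2_nonzero[of t]
  unfolding GT_symbol_def M_symbol1_def M_symbol2_def Jgrad_symbol1_def Jgrad_symbol2_def
    Dsym_eq_symbols[OF assms] of_real_Bern_uminus[OF assms]
  by (simp add: field_simps) algebra

lemma GT_symbol_M_symbol_psis:
  "GT_symbol t (M_symbol1 t (w2 t - inverse (w2 t))) (M_symbol2 t (inverse (w1 t) - w1 t))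
    = 4/3 * of_real (sin (fst t / 2) * sin (snd t / 2) * (cos (snd t) - cos (fst t)))"
  using w1_nonzero[of t] w2_nonzero[of t]
  unfolding GT_symbol_def M_symbol1_def M_symbol2_def of_real_mult of_real_diff
    trig_eq_w(1,2,7,8)
  by (simp add: field_simps)

section \<open>The coarse symbol and the two-level operator\<close>

lemma sin_half_eq_0_imp_eq_0:
  assumes "x \<in> {-pi/2..<3*pi/2}" and "sin (x/2) = 0"
  shows "x = 0"
proof -
  obtain i :: int where i: "x/2 = of_int i * pi"
    using assms(2) by (auto simp: sin_zero_iff_int2)
  with assms(1) have "-1/4 * pi \<le> of_int i * pi" and "of_int i * pi < 3/4 * pi"
    by auto
  then have "-1/4 \<le> (of_int i :: real)" and "(of_int i :: real) < 3/4"
    by (simp_all only: mult_le_cancel_right_pos[OF pi_gt_zero] mult_less_cancel_right_pos[OF pi_gt_zero])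
  then have "i = 0"
    by linarith
  with i show ?thesis
    by simp
qed

lemma Re_Dsym_pos:
  assumes "\<epsilon> > 0" and "fst t \<in> {-pi/2..<3*pi/2}" and "snd t \<in> {-pi/2..<3*pi/2}" and "t \<noteq> (0, 0)"
  shows "Re (Dsym \<epsilon> \<beta>1 \<beta>2 h t) > 0"
proof -
  have cos_bound: "2 + cos y > 0" for y :: real
    using cos_ge_minus_one[of y] by linarith
  have weight_nonneg: "(2 + cos y) * sin (x/2)^2 * sigma \<epsilon> b \<ge> 0" for x y b
    using cos_bound[of y] sigma_pos[OF assms(1), of b] by simp
  have weight_pos: "(2 + cos y) * sin (x/2)^2 * sigma \<epsilon> b > 0" if "sin (x/2) \<noteq> 0" for x y b
    using that cos_bound[of y] sigma_pos[OF assms(1), of b] by simp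
  have "sin (fst t/2) \<noteq> 0 \<or> sin (snd t/2) \<noteq> 0"
    using sin_half_eq_0_imp_eq_0 assms(2-4) by (cases t) auto
  then show ?thesis
    unfolding Dsym_def Let_def
    using weight_pos weight_nonneg by (auto intro: add_pos_nonneg add_nonneg_pos)
qed

lemma Aaux_phi_Nset:
  assumes "\<epsilon> > 0"
  shows "Aaux \<epsilon> \<beta>1 \<beta>2 h \<gamma> (\<lambda>k. c * phi Nset t k)
    = (\<lambda>k. (2 * of_real \<gamma> / 3 * Dsym \<epsilon> \<beta>1 \<beta>2 h t) * (c * phi Nset t k))"
  unfolding Aaux_def Jgrad_scale Jgrad_phi_Nset scale_edge_mode GT_Aop_edge_mode[OF assms]
    GT_symbol_M_symbol_Jgrad_symbol[OF assms]
  by (simp add: ac_simps)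

lemma AauxInv_phi_Nset:
  assumes "\<epsilon> > 0" and "2 * of_real \<gamma> / 3 * Dsym \<epsilon> \<beta>1 \<beta>2 h t \<noteq> 0"
  shows "AauxInv \<epsilon> \<beta>1 \<beta>2 h \<gamma> t (\<lambda>k. q * phi Nset t k)
    = (\<lambda>k. q / (2 * of_real \<gamma> / 3 * Dsym \<epsilon> \<beta>1 \<beta>2 h t) * phi Nset t k)"
  unfolding AauxInv_def
proof (rule the_equality)
  let ?L = "2 * of_real \<gamma> / 3 * Dsym \<epsilon> \<beta>1 \<beta>2 h t"
  have "(\<lambda>k. q / ?L * phi Nset t k) \<in> spanN t"
    unfolding spanN_def by blast
  moreover have "Aaux \<epsilon> \<beta>1 \<beta>2 h \<gamma> (\<lambda>k. q / ?L * phi Nset t k) = (\<lambda>k. q * phi Nset t k)"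
    using assms(2) unfolding Aaux_phi_Nset[OF assms(1)] by simp
  ultimately show "(\<lambda>k. q / ?L * phi Nset t k) \<in> spanN t \<and>
        Aaux \<epsilon> \<beta>1 \<beta>2 h \<gamma> (\<lambda>k. q / ?L * phi Nset t k) = (\<lambda>k. q * phi Nset t k)"
    ..
  fix u
  assume u: "u \<in> spanN t \<and> Aaux \<epsilon> \<beta>1 \<beta>2 h \<gamma> u = (\<lambda>k. q * phi Nset t k)"
  then obtain c where c: "u = (\<lambda>k. c * phi Nset t k)"
    unfolding spanN_def by auto
  with u have "(\<lambda>k. ?L * (c * phi Nset t k)) = (\<lambda>k. q * phi Nset t k)"
    by (simp add: Aaux_phi_Nset[OF assms(1)])
  from fun_cong[OF this, of "(0, 0)"] have "c = q / ?L"
    using assms(2) by (simp add: phi_Nset_origin field_simps)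
  with c show "u = (\<lambda>k. q / ?L * phi Nset t k)"
    by simp
qed

lemma Skc_eq_if_GT_Aop_in_span:
  assumes "\<epsilon> > 0" and "2 * of_real \<gamma> / 3 * Dsym \<epsilon> \<beta>1 \<beta>2 h t \<noteq> 0"
    and "transl_inv_lin S" and "S (phi Nset t) = (\<lambda>k. s * phi Nset t k)"
    and "GT (Aop \<epsilon> \<beta>1 \<beta>2 h \<gamma> f) = (\<lambda>k. q * phi Nset t k)"
  shows "Skc \<epsilon> \<beta>1 \<beta>2 h \<gamma> t S f
    = (\<lambda>k. f k - q / (2 * of_real \<gamma> / 3 * Dsym \<epsilon> \<beta>1 \<beta>2 h t) * (1 - s) * psiJ \<epsilon> \<beta>1 \<beta>2 h t k)"
proof -
  define r where "r = q / (2 * of_real \<gamma> / 3 * Dsym \<epsilon> \<beta>1 \<beta>2 h t)"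
  have "S (\<lambda>k. r * phi Nset t k) = (\<lambda>k. r * S (phi Nset t) k)"
    using assms(3) unfolding transl_inv_lin_def by blast
  then have "(\<lambda>k. r * phi Nset t k - S (\<lambda>k. r * phi Nset t k) k) = (\<lambda>k. r * (1 - s) * phi Nset t k)"
    using assms(4) by (simp add: algebra_simps)
  then show ?thesis
    unfolding Skc_def Let_def assms(5) AauxInv_phi_Nset[OF assms(1,2)] r_def[symmetric]
    by (simp add: Jgrad_scale psiJ_def)
qed

theorem mainTheorem5:
  fixes \<epsilon> \<beta>1 \<beta>2 h \<gamma> :: real and \<theta> :: "real \<times> real"
    and S :: "gridfun \<Rightarrow> gridfun" and s :: "real \<times> real \<Rightarrow> complex"
  assumes "\<epsilon> > 0" and "h > 0" and "\<gamma> > 0"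
    and "transl_inv_lin S"
    and "\<And>t. S (phi Nset t) = (\<lambda>k. s t * phi Nset t k)"
    and "fst \<theta> \<in> {-pi/2..<3*pi/2}" and "snd \<theta> \<in> {-pi/2..<3*pi/2}" and "\<theta> \<noteq> (0, 0)"
  shows "Dsym \<epsilon> \<beta>1 \<beta>2 h \<theta> \<noteq> 0
    \<and> (\<forall>c. Aaux \<epsilon> \<beta>1 \<beta>2 h \<gamma> (\<lambda>k. c * phi Nset \<theta> k)
           = (\<lambda>k. (2 * of_real \<gamma> / 3 * Dsym \<epsilon> \<beta>1 \<beta>2 h \<theta>) * (c * phi Nset \<theta> k)))
    \<and> psiJ \<epsilon> \<beta>1 \<beta>2 h \<theta> \<in> FE \<theta> \<and> psis \<theta> \<in> FE \<theta>
    \<and> Skc \<epsilon> \<beta>1 \<beta>2 h \<gamma> \<theta> S (psiJ \<epsilon> \<beta>1 \<beta>2 h \<theta>) = (\<lambda>k. s \<theta> * psiJ \<epsilon> \<beta>1 \<beta>2 h \<theta> k)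
    \<and> Skc \<epsilon> \<beta>1 \<beta>2 h \<gamma> \<theta> S (psis \<theta>) =
        (\<lambda>k. (2 * (s \<theta> - 1) * of_real (sin (fst \<theta> / 2) * sin (snd \<theta> / 2)
                 * (cos (snd \<theta>) - cos (fst \<theta>))) / Dsym \<epsilon> \<beta>1 \<beta>2 h \<theta>) * psiJ \<epsilon> \<beta>1 \<beta>2 h \<theta> k
              + psis \<theta> k)"
proof -
  let ?D = "Dsym \<epsilon> \<beta>1 \<beta>2 h \<theta>" and ?psiJ = "psiJ \<epsilon> \<beta>1 \<beta>2 h \<theta>"
  let ?X = "sin (fst \<theta> / 2) * sin (snd \<theta> / 2) * (cos (snd \<theta>) - cos (fst \<theta>))"
  have D: "?D \<noteq> 0"
    using Re_Dsym_pos[OF assms(1,6-8), of \<beta>1 \<beta>2 h] by auto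
  then have L: "2 * of_real \<gamma> / 3 * ?D \<noteq> 0"
    using assms(3) by simp
  have "GT (Aop \<epsilon> \<beta>1 \<beta>2 h \<gamma> ?psiJ) = (\<lambda>k. (2 * of_real \<gamma> / 3 * ?D) * phi Nset \<theta> k)"
    using Aaux_phi_Nset[OF assms(1), of _ _ _ _ 1] unfolding Aaux_def psiJ_def by simp
  from Skc_eq_if_GT_Aop_in_span[OF assms(1) L assms(4,5) this]
  have Skc_psiJ: "Skc \<epsilon> \<beta>1 \<beta>2 h \<gamma> \<theta> S ?psiJ = (\<lambda>k. s \<theta> * ?psiJ k)"
    using L by (simp add: algebra_simps)
  have "GT (Aop \<epsilon> \<beta>1 \<beta>2 h \<gamma> (psis \<theta>)) = (\<lambda>k. (of_real \<gamma> * (4/3 * of_real ?X)) * phi Nset \<theta> k)"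
    unfolding psis_eq_edge_mode GT_Aop_edge_mode[OF assms(1)] GT_symbol_M_symbol_psis ..
  from Skc_eq_if_GT_Aop_in_span[OF assms(1) L assms(4,5) this]
  have "Skc \<epsilon> \<beta>1 \<beta>2 h \<gamma> \<theta> S (psis \<theta>) =
      (\<lambda>k. psis \<theta> k - of_real \<gamma> * (4/3 * of_real ?X) / (2 * of_real \<gamma> / 3 * ?D) * (1 - s \<theta>) * ?psiJ k)" .
  also have "of_real \<gamma> * (4/3 * of_real ?X) / (2 * of_real \<gamma> / 3 * ?D) * (1 - s \<theta>)
      = - (2 * (s \<theta> - 1) * of_real ?X / ?D)"
    using D assms(3) by (simp add: field_simps)
  finally have Skc_psis: "Skc \<epsilon> \<beta>1 \<beta>2 h \<gamma> \<theta> S (psis \<theta>) =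
      (\<lambda>k. (2 * (s \<theta> - 1) * of_real ?X / ?D) * ?psiJ k + psis \<theta> k)"
    by (simp add: algebra_simps)
  show ?thesis
    using D Aaux_phi_Nset[OF assms(1)] Skc_psiJ Skc_psis edge_mode_in_FE
    unfolding psiJ_def Jgrad_phi_Nset psis_eq_edge_mode by simp
qed

end
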